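(* Let $A$ be a finite alphabet with at least two symbols and $X=A^{\mathbb{N}}$. There exists a sequence $\{\mu_\ell\}_{\ell\in\mathbb{N}}$ in $\mathcal{M}^+(X)$ which converges with respect to the projective distance $\rho$ but does not converge with respect to Ornstein's $\bar{d}$-distance.
   Context: For $\pmb{a}=a_1\cdots a_n\in A^n$, $[\pmb{a}]=\{\pmb{x}\in X:\ x_1\cdots x_n=\pmb{a}\}$. $\mathcal{M}^+(X)$ is the set of Borel probability measures $\mu$ on $X$ with $\mu[\pmb{a}]>0$ for all finite words $\pmb{a}$. Projective distance: $\rho(\mu,\nu)=\sup_{n\in\mathbb{N}}\max_{\pmb{a}\in A^n}\frac1n\left|\log\frac{\mu[\pmb{a}]}{\nu[\pmb{a}]}\right|$. A coupling of $\mu,\nu$ is a Borel probability measure $\lambda$ on $(A\times A)^{\mathbb{N}}$ with coordinate marginals $\mu$ and $\nu$; $J(\mu,\nu)$ is the set of couplings. With $\bar{\Delta}=\{\pmb{x}\times\pmb{y}: x_1\neq y_1\}$ and $T$ the left shift on $(A\times A)^{\mathbb{N}}$, $\bar{d}(\mu,\nu)=\inf_{\lambda\in J(\mu,\nu)}\limsup_{n\to\infty}\frac1n\sum_{k=0}^{n-1}\lambda(T^{-k}\bar{\Delta})$. *)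

theory Defs
  imports "HOL-Probability.Probability"
begin

text \<open>The shift space X = A^N over a finite alphabet 'a, with its Borel sigma-algebra
  (= product sigma-algebra of the discrete sigma-algebras, since A is finite).\<close>

definition Xsig :: "(nat \<Rightarrow> 'a) measure" where
  "Xsig = PiM UNIV (\<lambda>_. count_space UNIV)"

text \<open>Cylinder set [a] for a finite word a = a_1 ... a_n (list, 0-indexed).\<close>
definition cylinder :: "'a list \<Rightarrow> (nat \<Rightarrow> 'a) set" where
  "cylinder w = {x. \<forall>i<length w. x i = w ! i}"

definition prob_on_X :: "(nat \<Rightarrow> 'a) measure \<Rightarrow> bool" where
  "prob_on_X \<mu> \<longleftrightarrow> prob_space \<mu> \<and> sets \<mu> = sets Xsig"

definition Mplus :: "(nat \<Rightarrow> 'a) measure set" where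
  "Mplus = {\<mu>. prob_on_X \<mu> \<and> (\<forall>w. measure \<mu> (cylinder w) > 0)}"

definition rho :: "(nat \<Rightarrow> 'a) measure \<Rightarrow> (nat \<Rightarrow> 'a) measure \<Rightarrow> ereal" where
  "rho \<mu> \<nu> = (SUP n\<in>{1..}. SUP w\<in>{w::'a list. length w = n}.
      ereal (\<bar>ln (measure \<mu> (cylinder w) / measure \<nu> (cylinder w))\<bar> / real n))"

definition couplings :: "(nat \<Rightarrow> 'a) measure \<Rightarrow> (nat \<Rightarrow> 'a) measure \<Rightarrow> (nat \<Rightarrow> 'a \<times> 'a) measure set" where
  "couplings \<mu> \<nu> = {L. prob_space L \<and> sets L = sets (PiM UNIV (\<lambda>_::nat. count_space (UNIV::('a\<times>'a) set)))
      \<and> distr L Xsig (\<lambda>z i. fst (z i)) = \<mu> \<and> distr L Xsig (\<lambda>z i. snd (z i)) = \<nu>}"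

text \<open>Ornstein's d-bar distance. T^{-k} of {x \<times> y : x_1 \<noteq> y_1} is the set where the k-th
  coordinates (0-indexed) differ.\<close>
definition dbar :: "(nat \<Rightarrow> 'a) measure \<Rightarrow> (nat \<Rightarrow> 'a) measure \<Rightarrow> ereal" where
  "dbar \<mu> \<nu> = (INF L\<in>couplings \<mu> \<nu>.
      limsup (\<lambda>n. ereal ((1 / real n) * (\<Sum>k<n. measure L {z. fst (z k) \<noteq> snd (z k)}))))"

end

theory Submission
  imports Defs "HOL-Real_Asymp.Real_Asymp"
begin

text \<open>
  All measures are renewal processes: at each time j the current symbol is replaced by a uniformly
  random one with probability 1/((j+1)(j+2)) and kept otherwise. The limit \<mu> is this process, and
  \<mu>_l additionally pins the symbol at time l to c_l with probability 3/4. Cylinders of length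
  at most l have equal mass under \<mu>_l and \<mu>, and all others differ by a factor at most
  4|A|(l+1)(l+2), so \<rho>(\<mu>_l, \<mu>) \<le> log(4|A|(l+1)(l+2))/(l+1) \<rightarrow> 0.
  Refreshes after time l have total probability below 1/(l+2), so under \<mu>_l the symbol c_l
  has marginal probability about 3/4 at every time k \<ge> l, and any other symbol about 1/4.
  A small d-bar distance forces the Cesaro averages of one-dimensional marginals to be close;
  alternating c_l between two symbols therefore rules out any d-bar limit.
\<close>

section \<open>The projective distance and d-bar\<close>

lemma space_Xsig [simp]: "space Xsig = UNIV"
  by (simp add: Xsig_def space_PiM)

lemma cylinder_in_sets: "cylinder w \<in> sets Xsig"
proof -
  have "{x \<in> space Xsig. \<forall>i<length w. x i = w!i} \<in> sets Xsig"
    unfolding Xsig_def by measurable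
  then show ?thesis by (simp add: cylinder_def)
qed

lemma coord_eq_in_sets: "{x. x k = d} \<in> sets Xsig"
proof -
  have "{x \<in> space Xsig. x k = d} \<in> sets Xsig"
    unfolding Xsig_def by measurable
  then show ?thesis by simp
qed

lemma abs_ln_div_le:
  fixes a b C :: real
  assumes "0 < a" "0 < b" "a \<le> C * b" "b \<le> C * a"
  shows "\<bar>ln (a / b)\<bar> \<le> ln C"
proof -
  have "0 < C * b" using assms by linarith
  then have "0 < C" using assms(2) by (simp add: zero_less_mult_iff)
  then have "ln a \<le> ln (C * b)" "ln b \<le> ln (C * a)"
    using assms by simp_all
  then have "ln a \<le> ln C + ln b" "ln b \<le> ln C + ln a"
    using assms \<open>0 < C\<close> by (simp_all add: ln_mult)
  then show ?thesis using assms by (simp add: ln_div)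
qed

lemma rho_le_of_cylinder_bounds:
  fixes \<mu> \<nu> :: "(nat \<Rightarrow> 'a) measure"
  assumes pos: "\<And>w. 0 < measure \<mu> (cylinder w)" "\<And>w. 0 < measure \<nu> (cylinder w)"
    and le: "\<And>w. measure \<mu> (cylinder w) \<le> C * measure \<nu> (cylinder w)"
      "\<And>w. measure \<nu> (cylinder w) \<le> C * measure \<mu> (cylinder w)"
    and eq: "\<And>w. length w \<le> l \<Longrightarrow> measure \<mu> (cylinder w) = measure \<nu> (cylinder w)"
  shows "rho \<mu> \<nu> \<le> ereal (ln C / (real l + 1))"
  unfolding rho_def
proof (intro SUP_least)
  fix n :: nat and w :: "'a list"
  assume "n \<in> {1..}" "w \<in> {w. length w = n}"
  then have n: "length w = n" by simp
  have ratio: "\<bar>ln (measure \<mu> (cylinder v) / measure \<nu> (cylinder v))\<bar> \<le> ln C" for v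
    by (rule abs_ln_div_le[OF pos le])
  have ln_C: "0 \<le> ln C"
    using ratio[of w] by simp
  show "ereal (\<bar>ln (measure \<mu> (cylinder w) / measure \<nu> (cylinder w))\<bar> / real n)
      \<le> ereal (ln C / (real l + 1))"
  proof (cases "n \<le> l")
    case True
    then show ?thesis using eq[of w] n pos(2)[of w] ln_C by simp
  next
    case False
    have "\<bar>ln (measure \<mu> (cylinder w) / measure \<nu> (cylinder w))\<bar> / real n \<le> ln C / real n"
      using ratio[of w] by (simp add: divide_right_mono)
    also have "\<dots> \<le> ln C / (real l + 1)"
      using False ln_C by (intro divide_left_mono) auto
    finally show ?thesis by simp
  qed
qed

lemma rho_nonneg: "0 \<le> rho \<mu> \<nu>"
  unfolding rho_def by (rule SUP_upper2[of 1], simp, rule SUP_upper2[of "[undefined]"]) auto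

lemma coupling_marginal_diff:
  assumes "L \<in> couplings \<mu> \<nu>"
  shows "\<bar>measure \<mu> {x. x k = a} - measure \<nu> {x. x k = a}\<bar>
    \<le> measure L {z. fst (z k) \<noteq> snd (z k)}"
proof -
  let ?PM = "PiM UNIV (\<lambda>_::nat. count_space (UNIV :: ('a \<times> 'a) set))"
  have sets_L: "sets L = sets ?PM" and "prob_space L"
    and \<mu>: "distr L Xsig (\<lambda>z i. fst (z i)) = \<mu>" and \<nu>: "distr L Xsig (\<lambda>z i. snd (z i)) = \<nu>"
    using assms unfolding couplings_def by auto
  interpret prob_space L by fact
  have space_L: "space L = UNIV"
    using sets_eq_imp_space_eq[OF sets_L] by (simp add: space_PiM)
  have coord: "(\<lambda>z. z i) \<in> measurable L (count_space UNIV)" for i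
    using measurable_component_singleton[of i UNIV "\<lambda>_::nat. count_space (UNIV :: ('a \<times> 'a) set)"]
    by (simp add: measurable_cong_sets[OF sets_L refl])
  have events: "{z. P (z i)} \<in> events" for P i
    using measurable_sets[OF coord[of i], of "{y. P y}"] by (simp add: space_L vimage_def)
  have marginal: "(\<lambda>z i. f (z i)) \<in> measurable L Xsig" for f :: "'a \<times> 'a \<Rightarrow> 'a"
    unfolding Xsig_def by (rule measurable_PiM_single') (auto intro: measurable_compose[OF coord])
  have marginals: "measure \<mu> {x. x k = a} = prob {z. fst (z k) = a}"
    "measure \<nu> {x. x k = a} = prob {z. snd (z k) = a}"
    unfolding \<mu>[symmetric] \<nu>[symmetric]
    by (simp_all add: measure_distr[OF marginal coord_eq_in_sets] space_L vimage_def)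
  have union_bound: "prob {z. P (z k)} \<le> prob {z. Q (z k)} + prob {z. fst (z k) \<noteq> snd (z k)}"
    if "\<And>y. P y \<Longrightarrow> Q y \<or> fst y \<noteq> snd y" for P Q
  proof -
    have "prob {z. P (z k)} \<le> prob ({z. Q (z k)} \<union> {z. fst (z k) \<noteq> snd (z k)})"
      using that by (intro finite_measure_mono sets.Un events) blast
    also have "\<dots> \<le> prob {z. Q (z k)} + prob {z. fst (z k) \<noteq> snd (z k)}"
      by (intro measure_Un_le events)
    finally show ?thesis .
  qed
  show ?thesis
    using marginals union_bound[of "\<lambda>y. fst y = a" "\<lambda>y. snd y = a"]
      union_bound[of "\<lambda>y. snd y = a" "\<lambda>y. fst y = a"]
    by (force simp: abs_le_iff)
qed

lemma dbar_marginal_sums_close: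
  assumes "dbar \<mu> \<nu> < ereal e"
  shows "\<forall>\<^sub>F n in sequentially.
    \<bar>(\<Sum>k<n. measure \<mu> {x. x k = a}) - (\<Sum>k<n. measure \<nu> {x. x k = a})\<bar> \<le> e * real n"
proof -
  obtain L where L: "L \<in> couplings \<mu> \<nu>"
    and "limsup (\<lambda>n. ereal (1 / real n * (\<Sum>k<n. measure L {z. fst (z k) \<noteq> snd (z k)}))) < ereal e"
    using assms unfolding dbar_def INF_less_iff by blast
  then have "\<forall>\<^sub>F n in sequentially. 1 / real n * (\<Sum>k<n. measure L {z. fst (z k) \<noteq> snd (z k)}) < e"
    using Limsup_lessD by fastforce
  then show ?thesis
    using eventually_gt_at_top[of 0]
  proof eventually_elim
    case (elim n)
    have "\<bar>(\<Sum>k<n. measure \<mu> {x. x k = a}) - (\<Sum>k<n. measure \<nu> {x. x k = a})\<bar>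
        \<le> (\<Sum>k<n. measure L {z. fst (z k) \<noteq> snd (z k)})"
      unfolding sum_subtractf[symmetric]
      by (rule order_trans[OF sum_abs sum_mono[OF coupling_marginal_diff[OF L]]])
    also have "\<dots> \<le> e * real n"
      using elim by (simp add: field_simps)
    finally show ?case .
  qed
qed

lemma sum_lessThan_if_le:
  assumes "K \<le> n"
  shows "(\<Sum>k<n. if K \<le> k then x else y) = real K * y + real (n - K) * (x :: real)"
proof -
  have "{..<n} \<inter> {k. K \<le> k} = {K..<n}" "{..<n} \<inter> - {k. K \<le> k} = {..<K}"
    using assms by auto
  then show ?thesis by (simp add: sum.If_cases)
qed

lemma dbar_marginal_gap:
  fixes \<mu> \<mu>' \<nu> :: "(nat \<Rightarrow> 'a) measure"
  assumes "prob_space \<mu>'"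
    and lower: "\<And>k. K \<le> k \<Longrightarrow> p \<le> measure \<mu> {x. x k = a}"
    and upper: "\<And>k. K \<le> k \<Longrightarrow> measure \<mu>' {x. x k = a} \<le> q"
    and "dbar \<mu> \<nu> < ereal e" "dbar \<mu>' \<nu> < ereal e"
  shows "p - q \<le> 2 * e"
proof (rule ccontr)
  assume "\<not> p - q \<le> 2 * e"
  then obtain m :: nat where m: "real K * (1 + 2 * e) < real m * (p - q - 2 * e)"
    using ex_less_of_nat_mult[of "p - q - 2 * e"] by auto
  have "\<forall>\<^sub>F n in sequentially.
      \<bar>(\<Sum>k<n. measure \<mu> {x. x k = a}) - (\<Sum>k<n. measure \<nu> {x. x k = a})\<bar> \<le> e * real n
    \<and> \<bar>(\<Sum>k<n. measure \<mu>' {x. x k = a}) - (\<Sum>k<n. measure \<nu> {x. x k = a})\<bar> \<le> e * real n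
    \<and> K + m \<le> n"
    using assms(4,5) by (intro eventually_conj dbar_marginal_sums_close eventually_ge_at_top)
  then obtain n where close:
      "\<bar>(\<Sum>k<n. measure \<mu> {x. x k = a}) - (\<Sum>k<n. measure \<nu> {x. x k = a})\<bar> \<le> e * real n"
      "\<bar>(\<Sum>k<n. measure \<mu>' {x. x k = a}) - (\<Sum>k<n. measure \<nu> {x. x k = a})\<bar> \<le> e * real n"
    and n: "K + m \<le> n"
    by (auto dest: eventually_happens)
  have "real (n - K) * p = (\<Sum>k<n. if K \<le> k then p else 0)"
    using n by (simp add: sum_lessThan_if_le)
  also have "\<dots> \<le> (\<Sum>k<n. measure \<mu> {x. x k = a})"
    using lower by (intro sum_mono) auto
  finally have lower_sum: "real (n - K) * p \<le> (\<Sum>k<n. measure \<mu> {x. x k = a})" .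
  have "(\<Sum>k<n. measure \<mu>' {x. x k = a}) \<le> (\<Sum>k<n. if K \<le> k then q else 1)"
    using upper prob_space.prob_le_1[OF assms(1)] by (intro sum_mono) auto
  also have "\<dots> = real K + real (n - K) * q"
    using n by (simp add: sum_lessThan_if_le)
  finally have "real (n - K) * p \<le> real K + real (n - K) * q + 2 * e * real n"
    using lower_sum close by linarith
  then have "real (n - K) * (p - q - 2 * e) \<le> real K * (1 + 2 * e)"
    using n by (simp add: of_nat_diff algebra_simps)
  moreover have "real m * (p - q - 2 * e) \<le> real (n - K) * (p - q - 2 * e)"
    using n \<open>\<not> p - q \<le> 2 * e\<close> by (intro mult_right_mono) auto
  ultimately show False using m by linarith
qed

section \<open>Renewal processes\<close>

fun renewal_path :: "(nat \<Rightarrow> bool \<times> 'a) \<Rightarrow> nat \<Rightarrow> 'a" where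
  "renewal_path r 0 = snd (r 0)"
| "renewal_path r (Suc k) = (if fst (r (Suc k)) then snd (r (Suc k)) else renewal_path r k)"

definition seed_space :: "(nat \<Rightarrow> 'd pmf) \<Rightarrow> (nat \<Rightarrow> 'd) measure" where
  "seed_space R = PiM UNIV (\<lambda>j. measure_pmf (R j))"

definition renewal_measure :: "(nat \<Rightarrow> (bool \<times> 'a) pmf) \<Rightarrow> (nat \<Rightarrow> 'a) measure" where
  "renewal_measure R = distr (seed_space R) Xsig renewal_path"

lemma space_seed_space [simp]: "space (seed_space R) = UNIV"
  by (simp add: seed_space_def space_PiM)

lemma prob_space_seed_space: "prob_space (seed_space R)"
  unfolding seed_space_def by (rule prob_space_PiM) (simp add: prob_space_measure_pmf)

lemma product_prob_space_measure_pmf: "product_prob_space (\<lambda>j. measure_pmf (R j))"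
  by (simp add: product_prob_space_def product_prob_space_axioms_def product_sigma_finite_def
      prob_space_measure_pmf prob_space_imp_sigma_finite)

lemma measurable_seed_coord: "(\<lambda>r. r j) \<in> measurable (seed_space R) (count_space UNIV)"
  using measurable_component_singleton[of j UNIV "\<lambda>j. measure_pmf (R j)"]
  unfolding seed_space_def by simp

lemma seed_coord_set_in_sets: "{r. r j \<in> B} \<in> sets (seed_space R)"
  using measurable_sets[OF measurable_seed_coord, of B j R] by (simp add: vimage_def)

lemma measurable_renewal_path_coord:
  "(\<lambda>r. renewal_path r k) \<in> measurable (seed_space R) (count_space UNIV)"
proof (induction k)
  case (Suc k)
  have "{r \<in> space (seed_space R). fst (r (Suc k))} \<in> sets (seed_space R)"
    using seed_coord_set_in_sets[of "Suc k" "{y. fst y}" R] by simp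
  with Suc.IH show ?case
    by (auto intro!: measurable_If measurable_compose[OF measurable_seed_coord])
qed (auto intro: measurable_compose[OF measurable_seed_coord])

lemma measurable_renewal_path: "renewal_path \<in> measurable (seed_space R) Xsig"
  unfolding Xsig_def by (rule measurable_PiM_single') (auto intro: measurable_renewal_path_coord)

lemma prob_on_X_renewal_measure: "prob_on_X (renewal_measure R)"
  unfolding prob_on_X_def renewal_measure_def
  by (auto intro!: prob_space.prob_space_distr[OF prob_space_seed_space measurable_renewal_path])

lemma renewal_path_cong: "(\<And>j. j \<le> k \<Longrightarrow> r j = r' j) \<Longrightarrow> renewal_path r k = renewal_path r' k"
  by (induction k) auto

text \<open>The cylinder of w is the preimage under renewal_path of this finite set of seed prefixes.\<close>

definition renewal_seeds :: "'a list \<Rightarrow> (nat \<Rightarrow> bool \<times> 'a) set" where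
  "renewal_seeds w = {r \<in> PiE {..<length w} (\<lambda>_. UNIV). \<forall>i<length w. renewal_path r i = w ! i}"

lemma finite_renewal_seeds: "finite (renewal_seeds (w :: 'a::finite list))"
  by (rule finite_subset[of _ "PiE {..<length w} (\<lambda>_. UNIV)"]) (auto simp: renewal_seeds_def finite_PiE)

lemma sets_PiM_pmf_finite:
  fixes R :: "nat \<Rightarrow> 'd::countable pmf"
  assumes "finite J" "X \<subseteq> PiE J (\<lambda>_. UNIV)"
  shows "X \<in> sets (PiM J (\<lambda>j. measure_pmf (R j)))"
proof -
  have "sets (PiM J (\<lambda>j. measure_pmf (R j))) = sets (PiM J (\<lambda>_. count_space (UNIV :: 'd set)))"
    by (rule sets_PiM_cong) auto
  also have "\<dots> = Pow (PiE J (\<lambda>_. UNIV))"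
    using assms(1) by (simp add: count_space_PiM_finite)
  finally show ?thesis using assms(2) by simp
qed

lemma measure_PiM_pmf_finite:
  fixes R :: "nat \<Rightarrow> 'd::countable pmf"
  assumes "finite J" "finite X" "X \<subseteq> PiE J (\<lambda>_. UNIV)"
  shows "measure (PiM J (\<lambda>j. measure_pmf (R j))) X = (\<Sum>r\<in>X. \<Prod>j\<in>J. pmf (R j) (r j))"
proof -
  interpret product_prob_space "\<lambda>j. measure_pmf (R j)" UNIV
    by (rule product_prob_space_measure_pmf)
  have "finite_measure (PiM J (\<lambda>j. measure_pmf (R j)))"
    by (intro prob_space.finite_measure prob_space_PiM) (simp add: prob_space_measure_pmf)
  note emeasure_ne_top = finite_measure.emeasure_finite[OF this]
  have singleton: "{r} = PiE J (\<lambda>j. {r j})" if "r \<in> X" for r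
    using that assms(3) by (intro PiE_singleton[symmetric]) (auto simp: PiE_def)
  have "measure (PiM J (\<lambda>j. measure_pmf (R j))) X = (\<Sum>r\<in>X. measure (PiM J (\<lambda>j. measure_pmf (R j))) {r})"
  proof (rule measure_eq_sum_singleton[OF assms(2)])
    show "{r} \<in> sets (PiM J (\<lambda>j. measure_pmf (R j)))" if "r \<in> X" for r
      using that assms by (intro sets_PiM_pmf_finite) auto
  qed (simp add: emeasure_ne_top)
  also have "\<dots> = (\<Sum>r\<in>X. \<Prod>j\<in>J. pmf (R j) (r j))"
    using assms(1)
    by (intro sum.cong refl)
      (simp add: singleton measure_def emeasure_PiM emeasure_pmf_single prod_ennreal prod_nonneg)
  finally show ?thesis .
qed

lemma measure_renewal_cylinder:
  fixes R :: "nat \<Rightarrow> (bool \<times> 'a::finite) pmf"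
  shows "measure (renewal_measure R) (cylinder w)
    = (\<Sum>r\<in>renewal_seeds w. \<Prod>j<length w. pmf (R j) (r j))"
proof -
  interpret product_prob_space "\<lambda>j. measure_pmf (R j)" UNIV
    by (rule product_prob_space_measure_pmf)
  let ?J = "{..<length w}"
  have seeds: "renewal_seeds w \<subseteq> PiE ?J (\<lambda>_. UNIV)"
    by (auto simp: renewal_seeds_def)
  have "renewal_path -` cylinder w = prod_emb UNIV (\<lambda>j. measure_pmf (R j)) ?J (renewal_seeds w)"
  proof (rule set_eqI)
    fix r :: "nat \<Rightarrow> bool \<times> 'a"
    have "\<forall>i<length w. renewal_path (restrict r ?J) i = renewal_path r i"
      by (auto intro: renewal_path_cong)
    then show "r \<in> renewal_path -` cylinder w
        \<longleftrightarrow> r \<in> prod_emb UNIV (\<lambda>j. measure_pmf (R j)) ?J (renewal_seeds w)"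
      by (simp add: cylinder_def prod_emb_def renewal_seeds_def PiE_iff)
  qed
  moreover have "emeasure (seed_space R) (prod_emb UNIV (\<lambda>j. measure_pmf (R j)) ?J (renewal_seeds w))
      = emeasure (PiM ?J (\<lambda>j. measure_pmf (R j))) (renewal_seeds w)"
    unfolding seed_space_def using seeds by (intro emeasure_PiM_emb' sets_PiM_pmf_finite) auto
  ultimately have "measure (renewal_measure R) (cylinder w)
      = measure (PiM ?J (\<lambda>j. measure_pmf (R j))) (renewal_seeds w)"
    unfolding renewal_measure_def measure_def
    by (simp add: emeasure_distr[OF measurable_renewal_path cylinder_in_sets])
  also have "\<dots> = (\<Sum>r\<in>renewal_seeds w. \<Prod>j<length w. pmf (R j) (r j))"
    using seeds by (intro measure_PiM_pmf_finite finite_renewal_seeds) auto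
  finally show ?thesis .
qed

lemma renewal_cylinder_le:
  fixes R R' :: "nat \<Rightarrow> (bool \<times> 'a::finite) pmf"
  assumes "\<And>j y. j < length w \<Longrightarrow> pmf (R j) y \<le> a j * pmf (R' j) y" "\<And>j. 0 \<le> a j"
  shows "measure (renewal_measure R) (cylinder w)
    \<le> (\<Prod>j<length w. a j) * measure (renewal_measure R') (cylinder w)"
  unfolding measure_renewal_cylinder sum_distrib_left prod.distrib[symmetric]
  by (intro sum_mono prod_mono) (auto intro: assms)

lemma renewal_cylinder_le_perturbed:
  fixes R R' :: "nat \<Rightarrow> (bool \<times> 'a::finite) pmf"
  assumes "\<And>j. j \<noteq> l \<Longrightarrow> R j = R' j" "\<And>y. pmf (R l) y \<le> C * pmf (R' l) y" "1 \<le> C"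
  shows "measure (renewal_measure R) (cylinder w) \<le> C * measure (renewal_measure R') (cylinder w)"
proof -
  have "measure (renewal_measure R) (cylinder w)
      \<le> (\<Prod>j<length w. if j = l then C else 1) * measure (renewal_measure R') (cylinder w)"
    using assms by (intro renewal_cylinder_le) auto
  also have "\<dots> \<le> C * measure (renewal_measure R') (cylinder w)"
    using assms(3) by (intro mult_right_mono) (auto simp: prod.delta)
  finally show ?thesis .
qed

lemma renewal_cylinder_cong:
  fixes R R' :: "nat \<Rightarrow> (bool \<times> 'a::finite) pmf"
  assumes "\<And>j. j < length w \<Longrightarrow> R j = R' j"
  shows "measure (renewal_measure R) (cylinder w) = measure (renewal_measure R') (cylinder w)"
  unfolding measure_renewal_cylinder using assms by (intro sum.cong prod.cong) auto

lemma renewal_cylinder_pos: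
  fixes R :: "nat \<Rightarrow> (bool \<times> 'a::finite) pmf"
  assumes "\<And>j y. 0 < pmf (R j) y"
  shows "0 < measure (renewal_measure R) (cylinder w)"
proof -
  define r where "r = restrict (\<lambda>i. (True, w ! i)) {..<length w}"
  have "renewal_path r i = w ! i" if "i < length w" for i
    using that by (cases i) (auto simp: r_def)
  then have "r \<in> renewal_seeds w" by (auto simp: renewal_seeds_def r_def)
  moreover have "0 < (\<Prod>j<length w. pmf (R j) (r j))"
    by (intro prod_pos) (simp add: assms)
  ultimately show ?thesis
    unfolding measure_renewal_cylinder
    by (intro sum_pos2[OF finite_renewal_seeds]) (auto intro: prod_nonneg)
qed

lemma renewal_measure_in_Mplus:
  fixes R :: "nat \<Rightarrow> (bool \<times> 'a::finite) pmf"
  assumes "\<And>j y. 0 < pmf (R j) y"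
  shows "renewal_measure R \<in> Mplus"
  unfolding Mplus_def using prob_on_X_renewal_measure renewal_cylinder_pos[OF assms] by auto

lemma measure_seed_coord: "measure (seed_space R) {r. r j \<in> B} = measure_pmf.prob (R j) B"
proof -
  interpret product_prob_space "\<lambda>j. measure_pmf (R j)" UNIV
    by (rule product_prob_space_measure_pmf)
  have "emeasure (seed_space R) {r \<in> space (seed_space R). r j \<in> B} = emeasure (measure_pmf (R j)) B"
    unfolding seed_space_def by (rule emeasure_PiM_Collect_single) auto
  then show ?thesis by (simp add: measure_def)
qed

lemma measure_renewal_coord:
  "measure (renewal_measure R) {x. x k = d} = measure (seed_space R) {r. renewal_path r k = d}"
  unfolding renewal_measure_def
  by (simp add: measure_distr[OF measurable_renewal_path coord_eq_in_sets] vimage_def)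

lemma renewal_path_unrefreshed:
  assumes "l \<le> k" "\<And>j. l < j \<Longrightarrow> j \<le> k \<Longrightarrow> \<not> fst (r j)"
  shows "renewal_path r k = renewal_path r l"
  using assms by (induction k rule: dec_induct) auto

lemma renewal_path_refreshed: "r l = (True, c) \<Longrightarrow> renewal_path r l = c"
  by (cases l) auto

lemma renewal_marginal_bounds:
  fixes R :: "nat \<Rightarrow> (bool \<times> 'a) pmf"
  assumes "l \<le> k" and refresh: "(\<Sum>j\<in>{l<..k}. measure_pmf.prob (R j) {y. fst y}) \<le> s"
  shows "pmf (R l) (True, c) - s \<le> measure (renewal_measure R) {x. x k = c}"
    and "d \<noteq> c \<Longrightarrow> measure (renewal_measure R) {x. x k = d} \<le> 1 - pmf (R l) (True, c) + s"
proof -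
  interpret prob_space "seed_space R" by (rule prob_space_seed_space)
  define A where "A = {r :: nat \<Rightarrow> bool \<times> 'a. r l \<in> {(True, c)}}"
  define U where "U = (\<Union>j\<in>{l<..k}. {r :: nat \<Rightarrow> bool \<times> 'a. r j \<in> {y. fst y}})"
  have sets: "A \<in> events" "U \<in> events" "{r. renewal_path r k = e} \<in> events" for e
  proof -
    show "A \<in> events" unfolding A_def by (rule seed_coord_set_in_sets)
    show "U \<in> events" unfolding U_def by (intro sets.finite_UN seed_coord_set_in_sets) auto
    show "{r. renewal_path r k = e} \<in> events"
      using measurable_sets[OF measurable_renewal_path_coord, of "{e}" k R] by (simp add: vimage_def)
  qed
  have prob_A: "prob A = pmf (R l) (True, c)"
    unfolding A_def measure_seed_coord by (simp add: measure_pmf_single)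
  have "prob U \<le> (\<Sum>j\<in>{l<..k}. measure_pmf.prob (R j) {y. fst y})"
    unfolding U_def measure_seed_coord[symmetric]
    by (intro measure_UNION_le seed_coord_set_in_sets) auto
  with refresh have prob_U: "prob U \<le> s"
    by linarith
  have keeps_c: "renewal_path r k = c" if "r \<in> A" "r \<notin> U" for r
    using that assms(1) renewal_path_unrefreshed[of l k r] renewal_path_refreshed[of r l c]
    by (auto simp: A_def U_def)
  then have "prob A \<le> prob ({r. renewal_path r k = c} \<union> U)"
    using sets by (intro finite_measure_mono) auto
  also have "\<dots> \<le> prob {r. renewal_path r k = c} + prob U"
    by (intro measure_Un_le sets)
  finally show "pmf (R l) (True, c) - s \<le> measure (renewal_measure R) {x. x k = c}"
    unfolding measure_renewal_coord using prob_A prob_U by linarith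
  assume "d \<noteq> c"
  then have "prob {r. renewal_path r k = d} \<le> prob ((space (seed_space R) - A) \<union> U)"
    using sets keeps_c by (intro finite_measure_mono sets.Un sets.compl_sets) auto
  also have "\<dots> \<le> prob (space (seed_space R) - A) + prob U"
    by (intro measure_Un_le sets.compl_sets sets)
  also have "\<dots> = 1 - prob A + prob U"
    using prob_compl[OF sets(1)] by simp
  finally show "measure (renewal_measure R) {x. x k = d} \<le> 1 - pmf (R l) (True, c) + s"
    unfolding measure_renewal_coord using prob_A prob_U by linarith
qed

section \<open>Pinning one renewal time\<close>

definition refresh_prob :: "nat \<Rightarrow> real" where
  "refresh_prob j = 1 / ((real j + 1) * (real j + 2))"

lemma refresh_prob_pos: "0 < refresh_prob j"
  by (simp add: refresh_prob_def)

lemma refresh_prob_le_half: "refresh_prob j \<le> 1 / 2"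
proof -
  have "1 * 2 \<le> (real j + 1) * (real j + 2)" by (intro mult_mono) auto
  then show ?thesis unfolding refresh_prob_def by (intro frac_le) auto
qed

lemma sum_refresh_prob:
  assumes "l \<le> k"
  shows "(\<Sum>j\<in>{l<..k}. refresh_prob j) = 1 / (real l + 2) - 1 / (real k + 2)"
proof -
  have "refresh_prob j = - 1 / (real (Suc j) + 1) - - 1 / (real j + 1)" for j
    by (simp add: refresh_prob_def field_simps)
  moreover have "{l<..k} = {Suc l..<Suc k}" by auto
  ultimately show ?thesis
    using assms sum_Suc_diff'[of "Suc l" "Suc k" "\<lambda>i. - 1 / (real i + 1)"] by (simp add: ac_simps)
qed

definition uniform_refresh :: "nat \<Rightarrow> (bool \<times> 'a::finite) pmf" where
  "uniform_refresh j = pair_pmf (bernoulli_pmf (refresh_prob j)) (pmf_of_set UNIV)"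

definition pinned_refresh :: "nat \<Rightarrow> 'a::finite \<Rightarrow> nat \<Rightarrow> (bool \<times> 'a) pmf" where
  "pinned_refresh l c j = (if j = l
     then bernoulli_pmf (3/4) \<bind> (\<lambda>b. if b then return_pmf (True, c) else uniform_refresh j)
     else uniform_refresh j)"

lemma pmf_uniform_refresh:
  "pmf (uniform_refresh j) (b, x :: 'a::finite)
     = (if b then refresh_prob j else 1 - refresh_prob j) / real CARD('a)"
  using refresh_prob_pos[of j] refresh_prob_le_half[of j]
  by (simp add: uniform_refresh_def pmf_pair pmf_of_set)

lemma pmf_uniform_refresh_ge:
  "refresh_prob j / real CARD('a) \<le> pmf (uniform_refresh j) (y :: bool \<times> 'a::finite)"
  using refresh_prob_le_half[of j]
  by (cases y) (simp add: pmf_uniform_refresh divide_right_mono)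

lemma prob_uniform_refresh_fst:
  "measure_pmf.prob (uniform_refresh j :: (bool \<times> 'a::finite) pmf) {y. fst y} = refresh_prob j"
proof -
  have "{y :: bool \<times> 'a. fst y} = {True} \<times> UNIV" by auto
  then show ?thesis
    using refresh_prob_pos[of j] refresh_prob_le_half[of j]
    by (simp add: uniform_refresh_def measure_pmf_prob_product measure_pmf_single)
qed

lemma pmf_pinned_refresh_pinned:
  "pmf (pinned_refresh l c l) y = 3/4 * indicator {(True, c)} y + 1/4 * pmf (uniform_refresh l) y"
  by (simp add: pinned_refresh_def pmf_bind pmf_return indicator_def)

lemma pmf_uniform_refresh_pos: "0 < pmf (uniform_refresh j) (y :: bool \<times> 'a::finite)"
  using pmf_uniform_refresh_ge[of j y] refresh_prob_pos[of j]
  by (meson divide_pos_pos of_nat_0_less_iff order_less_le_trans zero_less_card_finite)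

lemma pmf_pinned_refresh_pos: "0 < pmf (pinned_refresh l c j) (y :: bool \<times> 'a::finite)"
proof (cases "j = l")
  case True
  then show ?thesis
    using pmf_uniform_refresh_pos[of l y] by (simp add: pmf_pinned_refresh_pinned add_nonneg_pos)
qed (simp add: pinned_refresh_def pmf_uniform_refresh_pos)

lemma pinning_bound_ge: "8 \<le> 4 * real CARD('a::finite) / refresh_prob l"
proof -
  have "1 \<le> real CARD('a)"
    by (simp add: Suc_leI)
  then have "2 * refresh_prob l \<le> real CARD('a)"
    using refresh_prob_le_half[of l] by linarith
  then show ?thesis
    using refresh_prob_pos[of l] by (simp add: le_divide_eq)
qed

lemma pmf_pinned_refresh_le:
  fixes c :: "'a::finite"
  shows "pmf (pinned_refresh l c l) y \<le> 4 * real CARD('a) / refresh_prob l * pmf (uniform_refresh l) y"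
proof -
  have "1 \<le> 4 * real CARD('a) / refresh_prob l * pmf (uniform_refresh l) y"
    using pmf_uniform_refresh_ge[of l y] refresh_prob_pos[of l] by (simp add: field_simps)
  then show ?thesis using pmf_le_1[of "pinned_refresh l c l" y] by linarith
qed

lemma pmf_uniform_refresh_le:
  fixes c :: "'a::finite"
  shows "pmf (uniform_refresh l) y \<le> 4 * real CARD('a) / refresh_prob l * pmf (pinned_refresh l c l) y"
proof -
  have "pmf (uniform_refresh l) y \<le> 4 * pmf (pinned_refresh l c l) y"
    by (simp add: pmf_pinned_refresh_pinned)
  also have "\<dots> \<le> 4 * real CARD('a) / refresh_prob l * pmf (pinned_refresh l c l) y"
    using pinning_bound_ge[where 'a='a, of l] by (intro mult_right_mono) auto
  finally show ?thesis .
qed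

lemma pinned_cylinder_bounds:
  fixes c :: "'a::finite" and l :: nat
  defines "C \<equiv> 4 * real CARD('a) / refresh_prob l"
  shows "measure (renewal_measure (pinned_refresh l c)) (cylinder w)
      \<le> C * measure (renewal_measure uniform_refresh) (cylinder w)"
    and "measure (renewal_measure uniform_refresh) (cylinder w)
      \<le> C * measure (renewal_measure (pinned_refresh l c)) (cylinder w)"
    and "length w \<le> l \<Longrightarrow> measure (renewal_measure (pinned_refresh l c)) (cylinder w)
      = measure (renewal_measure uniform_refresh) (cylinder w)"
proof -
  have C: "1 \<le> C" using pinning_bound_ge[where 'a='a, of l] by (simp add: C_def)
  show "measure (renewal_measure (pinned_refresh l c)) (cylinder w)
      \<le> C * measure (renewal_measure uniform_refresh) (cylinder w)"
    using C unfolding C_def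
    by (intro renewal_cylinder_le_perturbed[where l = l] pmf_pinned_refresh_le)
      (simp_all add: pinned_refresh_def)
  show "measure (renewal_measure uniform_refresh) (cylinder w)
      \<le> C * measure (renewal_measure (pinned_refresh l c)) (cylinder w)"
    using C unfolding C_def
    by (intro renewal_cylinder_le_perturbed[where l = l] pmf_uniform_refresh_le)
      (simp_all add: pinned_refresh_def)
  show "length w \<le> l \<Longrightarrow> measure (renewal_measure (pinned_refresh l c)) (cylinder w)
      = measure (renewal_measure uniform_refresh) (cylinder w)"
    by (intro renewal_cylinder_cong) (simp add: pinned_refresh_def)
qed

lemma rho_pinned_tendsto_zero:
  fixes c :: "nat \<Rightarrow> 'a::finite"
  shows "(\<lambda>l. rho (renewal_measure (pinned_refresh l (c l))) (renewal_measure uniform_refresh)) \<longlonglongrightarrow> 0"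
proof (rule tendsto_sandwich[OF _ _ tendsto_const])
  have "(\<lambda>l. ln (4 * real CARD('a) / refresh_prob l) / (real l + 1)) \<longlonglongrightarrow> 0"
    unfolding refresh_prob_def by real_asymp
  then show "(\<lambda>l. ereal (ln (4 * real CARD('a) / refresh_prob l) / (real l + 1))) \<longlonglongrightarrow> 0"
    by (simp add: zero_ereal_def tendsto_ereal)
  show "\<forall>\<^sub>F l in sequentially.
      rho (renewal_measure (pinned_refresh l (c l))) (renewal_measure uniform_refresh)
        \<le> ereal (ln (4 * real CARD('a) / refresh_prob l) / (real l + 1))"
    by (intro always_eventually allI rho_le_of_cylinder_bounds pinned_cylinder_bounds
        renewal_cylinder_pos pmf_pinned_refresh_pos pmf_uniform_refresh_pos)
qed (simp add: rho_nonneg)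

lemma pinned_marginal_bounds:
  fixes c :: "'a::finite"
  assumes "l \<le> k"
  shows "3/4 - 1 / (real l + 2) \<le> measure (renewal_measure (pinned_refresh l c)) {x. x k = c}"
    and "d \<noteq> c \<Longrightarrow> measure (renewal_measure (pinned_refresh l c)) {x. x k = d} \<le> 1/4 + 1 / (real l + 2)"
proof -
  have "(\<Sum>j\<in>{l<..k}. measure_pmf.prob (pinned_refresh l c j) {y. fst y}) = (\<Sum>j\<in>{l<..k}. refresh_prob j)"
    by (intro sum.cong) (auto simp: pinned_refresh_def prob_uniform_refresh_fst)
  also have "\<dots> \<le> 1 / (real l + 2)"
    using assms by (simp add: sum_refresh_prob)
  finally have refresh: "(\<Sum>j\<in>{l<..k}. measure_pmf.prob (pinned_refresh l c j) {y. fst y}) \<le> 1 / (real l + 2)" .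
  have "3/4 \<le> pmf (pinned_refresh l c l) (True, c)"
    by (simp add: pmf_pinned_refresh_pinned)
  then show "3/4 - 1 / (real l + 2) \<le> measure (renewal_measure (pinned_refresh l c)) {x. x k = c}"
    and "d \<noteq> c \<Longrightarrow> measure (renewal_measure (pinned_refresh l c)) {x. x k = d} \<le> 1/4 + 1 / (real l + 2)"
    using renewal_marginal_bounds(1)[OF assms refresh, of c]
      renewal_marginal_bounds(2)[OF assms refresh, of d c] by linarith+
qed

lemma pinned_not_dbar_tendsto:
  fixes c :: "nat \<Rightarrow> 'a::finite"
  assumes "\<And>N. \<exists>l\<ge>N. c l \<noteq> c (Suc l)"
  shows "\<not> (\<lambda>l. dbar (renewal_measure (pinned_refresh l (c l))) \<nu>) \<longlonglongrightarrow> 0"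
proof
  assume "(\<lambda>l. dbar (renewal_measure (pinned_refresh l (c l))) \<nu>) \<longlonglongrightarrow> 0"
  then have "\<forall>\<^sub>F l in sequentially. dbar (renewal_measure (pinned_refresh l (c l))) \<nu> < ereal (1/8)"
    by (rule order_tendstoD(2)) simp
  then obtain N where N: "\<And>l. N \<le> l \<Longrightarrow> dbar (renewal_measure (pinned_refresh l (c l))) \<nu> < ereal (1/8)"
    unfolding eventually_sequentially by blast
  obtain l where l: "N + 7 \<le> l" "c l \<noteq> c (Suc l)"
    using assms by blast
  have "(3/4 - 1 / (real l + 2)) - (1/4 + 1 / (real l + 2)) \<le> 2 * (1/8)"
  proof (rule dbar_marginal_gap[where K = "Suc l" and a = "c l" and \<nu> = \<nu>])
    show "prob_space (renewal_measure (pinned_refresh (Suc l) (c (Suc l))))"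
      using prob_on_X_renewal_measure unfolding prob_on_X_def by blast
    show "3/4 - 1 / (real l + 2) \<le> measure (renewal_measure (pinned_refresh l (c l))) {x. x k = c l}"
      if "Suc l \<le> k" for k
      using that by (intro pinned_marginal_bounds(1)) simp
    show "measure (renewal_measure (pinned_refresh (Suc l) (c (Suc l)))) {x. x k = c l}
        \<le> 1/4 + 1 / (real l + 2)" if "Suc l \<le> k" for k
    proof -
      have "1 / (real (Suc l) + 2) \<le> 1 / (real l + 2)"
        by (intro divide_left_mono) auto
      then show ?thesis
        using that l(2) pinned_marginal_bounds(2)[of "Suc l" k "c l" "c (Suc l)"] by simp
    qed
  qed (use N l in auto)
  moreover have "1 / (real l + 2) < 1/8"
    using l(1) by (simp add: divide_less_eq)
  ultimately show False by linarith
qed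

theorem theorem3p2:
  assumes "CARD('a::finite) \<ge> 2"
  shows "\<exists>\<mu>s :: nat \<Rightarrow> (nat \<Rightarrow> 'a) measure.
           (\<forall>l. \<mu>s l \<in> Mplus)
         \<and> (\<exists>\<mu>\<in>Mplus. (\<lambda>l. rho (\<mu>s l) \<mu>) \<longlonglongrightarrow> 0)
         \<and> \<not> (\<exists>\<nu>\<in>Mplus. (\<lambda>l. dbar (\<mu>s l) \<nu>) \<longlonglongrightarrow> 0)"
proof -
  obtain a0 a1 :: 'a where "a0 \<noteq> a1"
    using assms by (meson card_2_iff' ex_card)
  define c where "c l = (if even l then a0 else a1)" for l :: nat
  have "\<exists>l\<ge>N. c l \<noteq> c (Suc l)" for N
    using \<open>a0 \<noteq> a1\<close> by (auto simp: c_def)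
  then have "\<not> (\<lambda>l. dbar (renewal_measure (pinned_refresh l (c l))) \<nu>) \<longlonglongrightarrow> 0" for \<nu>
    by (rule pinned_not_dbar_tendsto)
  moreover have "renewal_measure (pinned_refresh l (c l)) \<in> Mplus" for l
    by (intro renewal_measure_in_Mplus pmf_pinned_refresh_pos)
  moreover have "renewal_measure uniform_refresh \<in> Mplus"
    by (intro renewal_measure_in_Mplus pmf_uniform_refresh_pos)
  ultimately show ?thesis
    using rho_pinned_tendsto_zero[of c]
    by (intro exI[of _ "\<lambda>l. renewal_measure (pinned_refresh l (c l))"]) blast
qed

end
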